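(* Let $n\ge 5$, $k\in\{2,\dots,n-2\}$, and let $P=(P_i)_{i\in\mathbb Z/n}$ be an $n$-gon and $(q_i)_{i\in\mathbb Z/n}$ an $n$-tuple of lines in the projective plane, in general position. Put $Q_i=q_i\cap q_{i-k}$, so that $Q=(Q_i)$ is an $n$-gon with $q_i=Q_iQ_{i+k}$. Then the following are equivalent: (i) for every $i$, the lines $P_iP_{i+1}$, $q_i$, $q_{i-k}$ are concurrent, and the lines $P_iP_{i+k}$, $q_i$, $q_{i-1}$ are concurrent (equivalently, all quadrilateral tiles with clockwise vertex labels $q_{i-k},P_{i+1},q_i,P_i$ and $P_i,q_i,P_{i+k},q_{i-1}$ are coherent); (ii) $Q$ is inscribed in $P$ and $T_k(Q)$ is inscribed in $T_k(P)$.
   Context: For an $n$-gon $P=(P_i)_{i\in\mathbb Z/n}$ in the projective plane and $k\in\{2,\dots,n-2\}$, the $k$-diagonal pentagram map is $T_k(P)=P'$ with $P'_i=P_iP_{i+k}\cap P_{i+1}P_{i+k+1}$ (here $XY$ denotes the line through $X,Y$). A polygon $Q$ is inscribed in $P$ (same number of vertices) if $Q_i$ lies on the line $P_iP_{i+1}$ for all $i$. A quadrilateral tile labeled by points $A,B$ and lines $c,d$ is coherent iff $A=B$, or $c=d$, or the lines $AB$, $c$, $d$ are concurrent; more generally coherence means the multi-ratio $\frac{\boldsymbol c(\mathbf A)\boldsymbol d(\mathbf B)}{\boldsymbol c(\mathbf B)\boldsymbol d(\mathbf A)}$ of lifts equals $1$. *)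

theory Defs
  imports "HOL-Analysis.Analysis"
begin

text \<open>Projective plane RP^2 in homogeneous coordinates: points and lines are
  nonzero vectors in real^3 (up to scaling).  Polygons are n-periodic maps int => real^3.\<close>

definition incident :: "real^3 \<Rightarrow> real^3 \<Rightarrow> bool" where
  "incident X l \<longleftrightarrow> X \<bullet> l = 0"

definition join :: "real^3 \<Rightarrow> real^3 \<Rightarrow> real^3" where
  "join X Y = cross3 X Y"

definition meet :: "real^3 \<Rightarrow> real^3 \<Rightarrow> real^3" where
  "meet l m = cross3 l m"

definition collinear3 :: "real^3 \<Rightarrow> real^3 \<Rightarrow> real^3 \<Rightarrow> bool" where
  "collinear3 a b c \<longleftrightarrow> a \<bullet> cross3 b c = 0"

definition concurrent3 :: "real^3 \<Rightarrow> real^3 \<Rightarrow> real^3 \<Rightarrow> bool" where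
  "concurrent3 l m p \<longleftrightarrow> l \<bullet> cross3 m p = 0"

definition periodic_tuple :: "nat \<Rightarrow> (int \<Rightarrow> real^3) \<Rightarrow> bool" where
  "periodic_tuple n P \<longleftrightarrow> (\<forall>i. P (i + int n) = P i)"

definition gen_pos_points :: "nat \<Rightarrow> (int \<Rightarrow> real^3) \<Rightarrow> bool" where
  "gen_pos_points n P \<longleftrightarrow>
     (\<forall>i j l. i mod int n \<noteq> j mod int n \<and> j mod int n \<noteq> l mod int n \<and> i mod int n \<noteq> l mod int n
        \<longrightarrow> \<not> collinear3 (P i) (P j) (P l))"

definition gen_pos_lines :: "nat \<Rightarrow> (int \<Rightarrow> real^3) \<Rightarrow> bool" where
  "gen_pos_lines n q \<longleftrightarrow>
     (\<forall>i j l. i mod int n \<noteq> j mod int n \<and> j mod int n \<noteq> l mod int n \<and> i mod int n \<noteq> l mod int n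
        \<longrightarrow> \<not> concurrent3 (q i) (q j) (q l))"

definition pentagram :: "nat \<Rightarrow> (int \<Rightarrow> real^3) \<Rightarrow> (int \<Rightarrow> real^3)" where
  "pentagram k P = (\<lambda>i. meet (join (P i) (P (i + int k))) (join (P (i + 1)) (P (i + int k + 1))))"

definition inscribed :: "(int \<Rightarrow> real^3) \<Rightarrow> (int \<Rightarrow> real^3) \<Rightarrow> bool" where
  "inscribed Q P \<longleftrightarrow> (\<forall>i. incident (Q i) (join (P i) (P (i + 1))))"

end

theory Submission
  imports Defs
begin

text \<open>Write Q i = q i \<inter> q (i - k). The diagonal Q i Q (i + k) is the line q i, so the vertex
  i of T_k(Q) is the point q i \<inter> q (i + 1); dually, the side of T_k(P) through its vertices
  i and i + 1 is the diagonal P (i + 1) P (i + 1 + k). Hence "T_k(Q) inscribed in T_k(P)" says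
  exactly that P i P (i + k), q i, q (i - 1) are concurrent, while "Q inscribed in P" is
  literally the other concurrency. General position of Q and of T_k(P) only serves to make
  the triple products that appear as scalars in these cross-product identities nonzero.\<close>

definition diagonal_meets :: "nat \<Rightarrow> (int \<Rightarrow> real^3) \<Rightarrow> int \<Rightarrow> real^3" where
  "diagonal_meets k q i = meet (q i) (q (i - int k))"

lemma cross3_cross3_shared:
  "cross3 (cross3 a b) (cross3 b c) = (a \<bullet> cross3 b c) *\<^sub>R b"
  by (simp add: cross3_simps forall_3)

lemma incident_scaleR_iff:
  assumes "c \<noteq> 0"
  shows "incident (c *\<^sub>R X) l \<longleftrightarrow> incident X l" "incident X (c *\<^sub>R l) \<longleftrightarrow> incident X l"
  using assms by (simp_all add: incident_def)

lemma mod_add_shift_neq: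
  fixes i :: int
  assumes "0 < k" "k < n"
  shows "i mod int n \<noteq> (i + int k) mod int n"
proof
  assume "i mod int n = (i + int k) mod int n"
  then have "n dvd k"
    by (simp add: mod_eq_dvd_iff flip: of_nat_dvd_iff)
  with assms show False
    by (auto dest: nat_dvd_not_less)
qed

lemma ex_mod_avoiding:
  fixes a b :: int
  assumes "3 \<le> n"
  shows "\<exists>l. l mod int n \<noteq> a mod int n \<and> l mod int n \<noteq> b mod int n"
proof -
  have "a mod int n \<noteq> (a + 1) mod int n" "a mod int n \<noteq> (a + 2) mod int n"
    "(a + 1) mod int n \<noteq> (a + 2) mod int n"
    using mod_add_shift_neq[of 1 n a] mod_add_shift_neq[of 2 n a] mod_add_shift_neq[of 1 n "a + 1"]
      assms by (simp_all add: add.assoc)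
  then show ?thesis
  proof (cases "(a + 1) mod int n = b mod int n")
    case True
    with \<open>(a + 1) mod int n \<noteq> (a + 2) mod int n\<close> \<open>a mod int n \<noteq> (a + 2) mod int n\<close>
    show ?thesis by (intro exI[of _ "a + 2"]) simp
  next
    case False
    with \<open>a mod int n \<noteq> (a + 1) mod int n\<close> show ?thesis
      by (intro exI[of _ "a + 1"]) simp
  qed
qed

lemma gen_pos_points_cross3_nonzero:
  assumes "gen_pos_points n R" "3 \<le> n" "i mod int n \<noteq> j mod int n"
  shows "cross3 (R i) (R j) \<noteq> 0"
proof
  assume "cross3 (R i) (R j) = 0"
  then have "collinear3 (R l) (R i) (R j)" for l
    by (simp add: collinear3_def)
  moreover obtain l where "l mod int n \<noteq> i mod int n" "l mod int n \<noteq> j mod int n"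
    using ex_mod_avoiding[OF assms(2)] by blast
  ultimately show False
    using assms(1)[unfolded gen_pos_points_def, rule_format, of l i j] assms(3) by simp
qed

lemma join_diagonal_meets:
  "join (diagonal_meets k q i) (diagonal_meets k q (i + int k))
     = (q (i - int k) \<bullet> cross3 (q i) (q (i + int k))) *\<^sub>R q i"
proof -
  have "join (diagonal_meets k q i) (diagonal_meets k q (i + int k))
      = cross3 (cross3 (q (i - int k)) (q i)) (cross3 (q i) (q (i + int k)))"
    by (simp add: diagonal_meets_def join_def meet_def cross_skew[of "q i" "q (i - int k)"]
        cross_skew[of "q (i + int k)" "q i"])
  then show ?thesis
    by (simp add: cross3_cross3_shared)
qed

lemma join_diagonal_meets_nonzero:
  assumes "gen_pos_points n (diagonal_meets k q)" "3 \<le> n" "0 < k" "k < n"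
  shows "q (i - int k) \<bullet> cross3 (q i) (q (i + int k)) \<noteq> 0"
  using gen_pos_points_cross3_nonzero[OF assms(1,2) mod_add_shift_neq[OF assms(3,4)]]
    join_diagonal_meets[of k q i] by (auto simp: join_def)

lemma pentagram_diagonal_meets:
  assumes "gen_pos_points n (diagonal_meets k q)" "3 \<le> n" "0 < k" "k < n"
  obtains c where "c \<noteq> 0" "pentagram k (diagonal_meets k q) i = c *\<^sub>R meet (q i) (q (i + 1))"
proof
  let ?\<alpha> = "\<lambda>i. q (i - int k) \<bullet> cross3 (q i) (q (i + int k))"
  have "pentagram k (diagonal_meets k q) i
      = meet (join (diagonal_meets k q i) (diagonal_meets k q (i + int k)))
             (join (diagonal_meets k q (i + 1)) (diagonal_meets k q (i + 1 + int k)))"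
    unfolding pentagram_def by (simp only: add.assoc add.commute[of "int k" 1])
  then show "pentagram k (diagonal_meets k q) i = (?\<alpha> i * ?\<alpha> (i + 1)) *\<^sub>R meet (q i) (q (i + 1))"
    by (simp only: join_diagonal_meets meet_def cross_mult_left cross_mult_right scaleR_scaleR mult.commute)
  show "?\<alpha> i * ?\<alpha> (i + 1) \<noteq> 0"
    using join_diagonal_meets_nonzero[OF assms] by simp
qed

lemma join_pentagram_consecutive:
  assumes "gen_pos_points n (pentagram k P)" "3 \<le> n"
  obtains c where "c \<noteq> 0"
    "join (pentagram k P i) (pentagram k P (i + 1)) = c *\<^sub>R join (P (i + 1)) (P (i + 1 + int k))"
proof
  let ?L = "\<lambda>i. join (P i) (P (i + int k))"
  have shift: "i + int k + 1 = i + 1 + int k" "i + 1 + 1 = i + 2"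
    "i + 1 + int k + 1 = i + 2 + int k"
    by simp_all
  have "join (pentagram k P i) (pentagram k P (i + 1))
      = cross3 (cross3 (?L i) (?L (i + 1))) (cross3 (?L (i + 1)) (?L (i + 2)))"
    unfolding pentagram_def join_def meet_def shift by (rule refl)
  also have "\<dots> = (?L i \<bullet> cross3 (?L (i + 1)) (?L (i + 2))) *\<^sub>R ?L (i + 1)"
    by (rule cross3_cross3_shared)
  finally show eq: "join (pentagram k P i) (pentagram k P (i + 1))
      = (?L i \<bullet> cross3 (?L (i + 1)) (?L (i + 2))) *\<^sub>R ?L (i + 1)" .
  have "i mod int n \<noteq> (i + int 1) mod int n"
    using assms(2) by (intro mod_add_shift_neq) auto
  then have "cross3 (pentagram k P i) (pentagram k P (i + 1)) \<noteq> 0"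
    using gen_pos_points_cross3_nonzero[OF assms, of i "i + 1"] by simp
  then show "?L i \<bullet> cross3 (?L (i + 1)) (?L (i + 2)) \<noteq> 0"
    unfolding join_def[symmetric] eq by simp
qed

lemma inscribed_diagonal_meets_iff:
  "inscribed (diagonal_meets k q) P
     \<longleftrightarrow> (\<forall>i. concurrent3 (join (P i) (P (i + 1))) (q i) (q (i - int k)))"
  by (simp add: inscribed_def incident_def concurrent3_def diagonal_meets_def meet_def inner_commute)

lemma inscribed_pentagram_diagonal_meets_iff:
  assumes "gen_pos_points n (diagonal_meets k q)" "gen_pos_points n (pentagram k P)"
    and "3 \<le> n" "0 < k" "k < n"
  shows "inscribed (pentagram k (diagonal_meets k q)) (pentagram k P)
     \<longleftrightarrow> (\<forall>i. concurrent3 (join (P i) (P (i + int k))) (q i) (q (i - 1)))"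
proof -
  have "incident (pentagram k (diagonal_meets k q) i) (join (pentagram k P i) (pentagram k P (i + 1)))
      \<longleftrightarrow> concurrent3 (join (P (i + 1)) (P (i + 1 + int k))) (q (i + 1)) (q i)" for i
  proof -
    obtain c where c: "c \<noteq> 0" "pentagram k (diagonal_meets k q) i = c *\<^sub>R meet (q i) (q (i + 1))"
      using pentagram_diagonal_meets[OF assms(1,3-5)] .
    obtain d where d: "d \<noteq> 0"
      "join (pentagram k P i) (pentagram k P (i + 1)) = d *\<^sub>R join (P (i + 1)) (P (i + 1 + int k))"
      using join_pentagram_consecutive[OF assms(2,3)] .
    show ?thesis
      unfolding c(2) d(2) incident_scaleR_iff[OF c(1)] incident_scaleR_iff[OF d(1)]
      by (simp add: incident_def concurrent3_def meet_def inner_commute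
          cross_skew[of "q (i + 1)" "q i"])
  qed
  then have "inscribed (pentagram k (diagonal_meets k q)) (pentagram k P)
      \<longleftrightarrow> (\<forall>i. concurrent3 (join (P (i + 1)) (P (i + 1 + int k))) (q (i + 1)) (q (i + 1 - 1)))"
    by (simp add: inscribed_def)
  also have "\<dots> \<longleftrightarrow> (\<forall>i. concurrent3 (join (P i) (P (i + int k))) (q i) (q (i - 1)))"
    by (metis diff_add_cancel)
  finally show ?thesis .
qed

theorem mainTheorem2:
  fixes n k :: nat and P q :: "int \<Rightarrow> real^3"
  assumes "n \<ge> 5" and "2 \<le> k" and "k \<le> n - 2"
    and "periodic_tuple n P" and "periodic_tuple n q"
    and "gen_pos_points n P" and "gen_pos_lines n q"
    and "gen_pos_points n (\<lambda>i. meet (q i) (q (i - int k)))"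
    and "gen_pos_points n (pentagram k P)"
  shows "(\<forall>i. concurrent3 (join (P i) (P (i + 1))) (q i) (q (i - int k))
            \<and> concurrent3 (join (P i) (P (i + int k))) (q i) (q (i - 1)))
         \<longleftrightarrow> (inscribed (\<lambda>i. meet (q i) (q (i - int k))) P
              \<and> inscribed (pentagram k (\<lambda>i. meet (q i) (q (i - int k)))) (pentagram k P))"
proof -
  have Q: "(\<lambda>i. meet (q i) (q (i - int k))) = diagonal_meets k q"
    by (simp add: fun_eq_iff diagonal_meets_def)
  have "3 \<le> n" "0 < k" "k < n"
    using assms(1-3) by auto
  with assms(8,9) show ?thesis
    unfolding Q inscribed_diagonal_meets_iff
    using inscribed_pentagram_diagonal_meets_iff[of n k q P] by blast
qed

end
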